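(* Let $N\ge1$ and let $\mathcal A$ be an $(N,1,\mathbb L)$-$N$-CO-SF; let $\mathbb A$ be the set of its $N$ sequences. Partition $\mathbb A$ into disjoint nonempty subsets $\mathbb A^{(q)}$, $q\in Q$, such that within each subset all sequences have a common length $l_qN$ (with $l_q$ a positive integer) and a common energy. Index each subset arbitrarily as $\mathbb A^{(q)}=(\mathbf a^{(q)}_0,\dots,\mathbf a^{(q)}_{k_q-1})$ with $k_q=|\mathbb A^{(q)}|$. For each $q$, let $(\mathbf v^{(q),0},\dots,\mathbf v^{(q),k_q-1})$ be an arbitrary $(k_q,1,\mathbb L^{(q)})$-$k_q$-CO-SF, where $\mathbf v^{(q),m}$ has length $r_{q,m}k_q$ for a positive integer $r_{q,m}$. For $q\in Q$ and $0\le m<k_q$ define $$\mathbf s^{(q,m)}=\mathbf v^{(q),m}\odot\mathbb A^{(q)}=\big(v^{(q),m}_i\,\mathbf a^{(q)}_{[i]_{k_q}}\big)_{i=0}^{r_{q,m}k_q-1},$$ a sequence of length $r_{q,m}k_q\,l_qN$. Then the family of the $N$ sequences $\{\mathbf s^{(q,m)}\}_{q\in Q,\,0\le m<k_q}$ is an $(N,1,\mathbb L')$-$N$-CO-SF, where $\mathbb L'$ is the set of distinct values among $\{r_{q,m}k_ql_qN\}$.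
   Context: All sequences are finite complex sequences. A sequence $\mathbf s=(s_0,\dots,s_{L-1})$ of length $L$ is identified with the function $s:\mathbb Z\to\mathbb C$ given by $s(n)=s_n$ for $0\le n<L$ and $s(n)=0$ otherwise. For sequences $\mathbf s,\mathbf s'$ of lengths $L,L'$ (possibly different), the aperiodic correlation is $R_{\mathbf s,\mathbf s'}(\tau)=\sum_{l=0}^{L-1}s(l)\,\overline{s'(l+\tau)}$ for $\tau\in\mathbb Z$. The energy of $\mathbf s$ is $E_{\mathbf s}=R_{\mathbf s,\mathbf s}(0)$. An $(M,1,\mathbb L)$-$N$-shift cross-orthogonal sequence family ($N$-CO-SF) is an indexed family $(\mathbf s^0,\dots,\mathbf s^{M-1})$ of complex sequences, where $\mathbf s^m$ has length $L^{(m)}$ divisible by $N$, and $\mathbb L$ is the set of distinct values among $L^{(0)},\dots,L^{(M-1)}$, such that for all $0\le m,m'<M$ and all $k\in\mathbb Z$, $R_{\mathbf s^m,\mathbf s^{m'}}(kN)=E_{\mathbf s^m}\,\delta(m-m')\,\delta(k)$, where $\delta$ is the Kronecker delta. Connection operator: for a vector $\mathbf v=(v_0,\dots,v_{K'-1})$ and an indexed set $\mathbb A=(\mathbf a_0,\dots,\mathbf a_{M-1})$ of $M$ sequences of common length $L$, with $K=\mathrm{lcm}(M,K')$, $\mathbf v\odot\mathbb A$ is the length-$KL$ concatenation $\big(v_{[k]_{K'}}\mathbf a_{[k]_M}\big)_{k=0}^{K-1}$, where $[a]_b$ is the remainder of $a$ modulo $b$. *)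

theory Defs
  imports Complex_Main
begin

definition seq_val :: "complex list \<Rightarrow> int \<Rightarrow> complex" where
  "seq_val s n = (if 0 \<le> n \<and> n < int (length s) then s ! nat n else 0)"

definition acorr :: "complex list \<Rightarrow> complex list \<Rightarrow> int \<Rightarrow> complex" where
  "acorr s s' \<tau> = (\<Sum>l<length s. seq_val s (int l) * cnj (seq_val s' (int l + \<tau>)))"

definition energy :: "complex list \<Rightarrow> complex" where
  "energy s = acorr s s 0"

definition co_sf :: "nat \<Rightarrow> nat \<Rightarrow> nat set \<Rightarrow> (nat \<Rightarrow> complex list) \<Rightarrow> bool" where
  "co_sf M N LL s \<longleftrightarrow>
     (\<forall>m<M. N dvd length (s m)) \<and>
     LL = {length (s m) | m. m < M} \<and>
     (\<forall>m<M. \<forall>m'<M. \<forall>k::int.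
        acorr (s m) (s m') (k * int N) =
          (if m = m' \<and> k = 0 then energy (s m) else 0))"

definition connect :: "complex list \<Rightarrow> complex list list \<Rightarrow> complex list" where
  "connect v As =
     concat (map (\<lambda>k. map (\<lambda>x. v ! (k mod length v) * x) (As ! (k mod length As)))
                 [0..<lcm (length As) (length v)])"

end

theory Submission
  imports Defs "HOL-Library.Groups_Big_Fun"
begin

text \<open>
  Every connection v \<odot> A is a superposition of scaled and shifted copies
  of the sequences in A: block t is v_t times A_{t mod k}, placed at offset t * l * N.
  Correlation is sesquilinear, so the correlation of two connections at a lag that is a
  multiple of N is a double sum, over pairs of block positions (t, t'), of products of
  coefficients times correlations of sequences of the original family at multiples of N.
  By the orthogonality of that family only the pairs using the same underlying sequence at
  lag zero survive.  Between different groups nothing survives.  Within a group the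
  surviving pairs are those with t' - t = c * k, and the remaining double sum is exactly the
  correlation of the coefficient vectors at the lag c * k, which the k-shift orthogonality
  of the coefficient family controls.
\<close>

lemma seq_val_append:
  "seq_val (xs @ ys) n = seq_val xs n + seq_val ys (n - int (length xs))"
  unfolding seq_val_def by (auto simp: nth_append nat_diff_distrib)

lemma seq_val_scale: "seq_val (map (\<lambda>x. c * x) xs) n = c * seq_val xs n"
  unfolding seq_val_def by auto

text \<open>A shifted finite sequence has finite support; this makes all correlation sums
  over the integers finite.\<close>
lemma finite_support_seq_val_shift: "finite {n. seq_val s (n - a) * y n \<noteq> 0}"
  by (rule finite_subset[of _ "{a..<a + int (length s)}"]) (auto simp: seq_val_def split: if_splits)

text \<open>The aperiodic correlation as a sum over all of the integers, so that index shifts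
  become free.\<close>
lemma acorr_Sum_any:
  "acorr s s' \<tau> = Sum_any (\<lambda>n. seq_val s n * cnj (seq_val s' (n + \<tau>)))"
proof -
  have "Sum_any (\<lambda>n. seq_val s n * cnj (seq_val s' (n + \<tau>)))
      = (\<Sum>n\<in>{0..<int (length s)}. seq_val s n * cnj (seq_val s' (n + \<tau>)))"
    by (rule Sum_any.expand_superset) (auto simp: seq_val_def split: if_splits)
  also have "\<dots> = acorr s s' \<tau>"
    unfolding acorr_def image_atLeastZeroLessThan_int[OF of_nat_0_le_iff]
    by (subst sum.reindex) auto
  finally show ?thesis by simp
qed

lemma Sum_any_shift: "Sum_any (\<lambda>n::int. g (n + c)) = Sum_any g"
proof -
  have "bij (\<lambda>n::int. n + c)"
    by (rule bij_betw_byWitness[where f'="\<lambda>n. n - c"]) auto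
  then show ?thesis by (rule Sum_any.reindex_cong[symmetric]) (simp add: o_def)
qed

lemma Sum_any_double_sum:
  fixes g :: "'i \<Rightarrow> 'j \<Rightarrow> 'n \<Rightarrow> 'a::comm_monoid_add"
  assumes "finite I" "finite J" "\<And>i j. i \<in> I \<Longrightarrow> j \<in> J \<Longrightarrow> finite {n. g i j n \<noteq> 0}"
  shows "Sum_any (\<lambda>n. \<Sum>i\<in>I. \<Sum>j\<in>J. g i j n) = (\<Sum>i\<in>I. \<Sum>j\<in>J. Sum_any (g i j))"
proof -
  define S where "S = (\<Union>i\<in>I. \<Union>j\<in>J. {n. g i j n \<noteq> 0})"
  have S: "finite S" "\<And>i j. i \<in> I \<Longrightarrow> j \<in> J \<Longrightarrow> {n. g i j n \<noteq> 0} \<subseteq> S"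
    using assms by (auto simp: S_def)
  have "Sum_any (\<lambda>n. \<Sum>i\<in>I. \<Sum>j\<in>J. g i j n) = (\<Sum>n\<in>S. \<Sum>i\<in>I. \<Sum>j\<in>J. g i j n)"
    by (rule Sum_any.expand_superset[OF S(1)])
       (auto simp: S_def elim!: sum.not_neutral_contains_not_neutral)
  also have "\<dots> = (\<Sum>i\<in>I. \<Sum>j\<in>J. \<Sum>n\<in>S. g i j n)"
    by (simp add: sum.swap[of _ S] sum.swap[of _ S J])
  also have "\<dots> = (\<Sum>i\<in>I. \<Sum>j\<in>J. Sum_any (g i j))"
    using S by (intro sum.cong refl Sum_any.expand_superset[symmetric]) auto
  finally show ?thesis .
qed

lemma acorr_superposition:
  fixes c :: "'i \<Rightarrow> complex" and d :: "'j \<Rightarrow> complex"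
  assumes "finite I" "finite J"
    and s: "\<And>n. seq_val s n = (\<Sum>i\<in>I. c i * seq_val (F i) (n - a i))"
    and s': "\<And>n. seq_val s' n = (\<Sum>j\<in>J. d j * seq_val (G j) (n - b j))"
  shows "acorr s s' \<tau> = (\<Sum>i\<in>I. \<Sum>j\<in>J. c i * cnj (d j) * acorr (F i) (G j) (\<tau> + a i - b j))"
proof -
  define h where "h i j n = seq_val (F i) (n - a i) * cnj (seq_val (G j) (n + \<tau> - b j))" for i j n
  have fin: "finite {n. h i j n \<noteq> 0}" for i j
    unfolding h_def by (rule finite_support_seq_val_shift)
  have shifted: "Sum_any (h i j) = acorr (F i) (G j) (\<tau> + a i - b j)" for i j
    using Sum_any_shift[of "h i j" "a i"] by (simp add: acorr_Sum_any h_def algebra_simps)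
  have "acorr s s' \<tau> = Sum_any (\<lambda>n. \<Sum>i\<in>I. \<Sum>j\<in>J. c i * cnj (d j) * h i j n)"
    unfolding acorr_Sum_any s s' h_def
    by (simp add: cnj_sum sum_product mult_ac)
  also have "\<dots> = (\<Sum>i\<in>I. \<Sum>j\<in>J. Sum_any (\<lambda>n. c i * cnj (d j) * h i j n))"
    using fin by (intro Sum_any_double_sum assms(1,2) finite_subset[OF _ fin]) auto
  also have "\<dots> = (\<Sum>i\<in>I. \<Sum>j\<in>J. c i * cnj (d j) * acorr (F i) (G j) (\<tau> + a i - b j))"
    by (simp add: Sum_any_right_distrib[OF fin, symmetric] shifted)
  finally show ?thesis .
qed

lemma length_concat_blocks:
  assumes "\<And>i. i < R \<Longrightarrow> length (F i) = L"
  shows "length (concat (map F [0..<R])) = R * L"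
  using assms by (induction R) auto

lemma seq_val_concat_blocks:
  assumes "\<And>i. i < R \<Longrightarrow> length (F i) = L"
  shows "seq_val (concat (map F [0..<R])) n = (\<Sum>i<R. seq_val (F i) (n - int i * int L))"
  using assms
proof (induction R)
  case 0
  show ?case by (auto simp: seq_val_def)
next
  case (Suc R)
  then show ?case by (simp add: seq_val_append length_concat_blocks algebra_simps)
qed

text \<open>If the coefficient vector has length R * k for k the number of sequences, then
  lcm(k, R * k) = R * k and the connection is the concatenation of the blocks v_t A_{t mod k}.\<close>
lemma connect_eq_blocks:
  assumes "length As = k" "k > 0" "length v = R * k"
  shows "connect v As = concat (map (\<lambda>t. map (\<lambda>x. v ! t * x) (As ! (t mod k))) [0..<R * k])"
  using assms by (auto simp: connect_def lcm_proj2_if_dvd intro!: arg_cong[where f = concat] map_cong)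

context
  fixes v :: "complex list" and A :: "nat \<Rightarrow> complex list" and k R L :: nat
  assumes k: "k > 0" and v: "length v = R * k" and A: "\<And>j. j < k \<Longrightarrow> length (A j) = L"
begin

lemma length_connect: "length (connect v (map A [0..<k])) = R * k * L"
  using k v A by (simp add: connect_eq_blocks length_concat_blocks)

lemma seq_val_connect:
  "seq_val (connect v (map A [0..<k])) n = (\<Sum>t<R * k. v ! t * seq_val (A (t mod k)) (n - int t * int L))"
  using k v A by (simp add: connect_eq_blocks seq_val_concat_blocks seq_val_scale)

end

lemma acorr_connect:
  assumes "k > 0" "length v = R * k" "\<And>j. j < k \<Longrightarrow> length (A j) = L"
    and "k' > 0" "length w = R' * k'" "\<And>j. j < k' \<Longrightarrow> length (B j) = L'"
  shows "acorr (connect v (map A [0..<k])) (connect w (map B [0..<k'])) \<tau> =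
    (\<Sum>t<R * k. \<Sum>t'<R' * k'. v ! t * cnj (w ! t') *
       acorr (A (t mod k)) (B (t' mod k')) (\<tau> + int t * int L - int t' * int L'))"
  by (rule acorr_superposition) (use assms seq_val_connect in simp_all)

lemma acorr_unit: "acorr [1] [1] x = (if x = 0 then 1 else 0)"
  by (simp add: acorr_def seq_val_def)

lemma seq_val_as_unit_pulses:
  "seq_val V n = (\<Sum>t<length V. V ! t * seq_val [1] (n - int t))"
proof -
  have "seq_val V n = seq_val (concat (map (\<lambda>t. [V ! t]) [0..<length V])) n"
    by (simp add: map_nth)
  also have "\<dots> = (\<Sum>t<length V. seq_val [V ! t] (n - int t))"
    using seq_val_concat_blocks[of "length V" "\<lambda>t. [V ! t]" 1] by simp
  also have "\<dots> = (\<Sum>t<length V. V ! t * seq_val [1] (n - int t))"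
    by (intro sum.cong refl) (simp add: seq_val_def)
  finally show ?thesis .
qed

text \<open>The correlation written as a double sum over all pairs of positions at distance tau;
  this recognises the correlations of the coefficient vectors inside the connection formula.\<close>
lemma acorr_double_sum:
  "acorr V V' \<tau> = (\<Sum>t<length V. \<Sum>t'<length V'. V ! t * cnj (V' ! t') * (if int t' = int t + \<tau> then 1 else 0))"
  by (subst acorr_superposition[OF _ _ seq_val_as_unit_pulses seq_val_as_unit_pulses])
     (auto simp: acorr_unit intro!: sum.cong)

lemma block_alignment_iff:
  fixes t t' :: nat and K :: int
  assumes "l > 0"
  shows "(t mod k = t' mod k \<and> K + int t * int l - int t' * int l = 0) \<longleftrightarrow>
         (\<exists>c. K = c * int k * int l \<and> int t' = int t + c * int k)"
proof
  assume h: "t mod k = t' mod k \<and> K + int t * int l - int t' * int l = 0"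
  then have "int k dvd int t' - int t"
    by (metis mod_eq_dvd_iff of_nat_mod)
  then obtain c where c: "int t' - int t = c * int k"
    by (metis dvdE mult.commute)
  moreover have "K = (int t' - int t) * int l"
    using h by (simp add: algebra_simps)
  ultimately show "\<exists>c. K = c * int k * int l \<and> int t' = int t + c * int k"
    by auto
next
  assume "\<exists>c. K = c * int k * int l \<and> int t' = int t + c * int k"
  then obtain c where K: "K = c * int k * int l" and t': "int t' = int t + c * int k"
    by blast
  then have "int (t' mod k) = int (t mod k)"
    by (simp add: zmod_int)
  with K t' show "t mod k = t' mod k \<and> K + int t * int l - int t' * int l = 0"
    by (simp add: algebra_simps)
qed

lemma connect_same_group:
  fixes A :: "nat \<Rightarrow> complex list"
  assumes k: "k > 0" and l: "l > 0"
    and A_len: "\<And>j. j < k \<Longrightarrow> length (A j) = l * N"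
    and A_orth: "\<And>j j' K. j < k \<Longrightarrow> j' < k \<Longrightarrow>
                   acorr (A j) (A j') (K * int N) = (if j = j' \<and> K = 0 then E else 0)"
    and v_len: "length v = R * k" and w_len: "length w = R' * k"
    and vw_orth: "\<And>c. acorr v w (c * int k) = (if b \<and> c = 0 then EV else 0)"
  shows "acorr (connect v (map A [0..<k])) (connect w (map A [0..<k])) (K * int N)
           = E * (if b \<and> K = 0 then EV else 0)"
proof -
  define aligned where
    "aligned t t' \<longleftrightarrow> (\<exists>c. K = c * int k * int l \<and> int t' = int t + c * int k)" for t t' :: nat
  have block: "acorr (A (t mod k)) (A (t' mod k)) (K * int N + int t * int (l * N) - int t' * int (l * N))
                 = (if aligned t t' then E else 0)" for t t'
  proof -
    have "K * int N + int t * int (l * N) - int t' * int (l * N) = (K + int t * int l - int t' * int l) * int N"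
      by (simp add: algebra_simps)
    then show ?thesis
      using A_orth[of "t mod k" "t' mod k"] block_alignment_iff[OF l, of t k t' K] k
      by (simp add: aligned_def)
  qed
  have expand: "acorr (connect v (map A [0..<k])) (connect w (map A [0..<k])) (K * int N)
      = (\<Sum>t<R * k. \<Sum>t'<R' * k. v ! t * cnj (w ! t') * (if aligned t t' then E else 0))"
    by (subst acorr_connect[where L = "l * N" and L' = "l * N"])
       (use k v_len w_len A_len block in simp_all)
  show ?thesis
  proof (cases "\<exists>c. K = c * int k * int l")
    case True
    then obtain c where c: "K = c * int k * int l" by blast
    with k l have "aligned t t' \<longleftrightarrow> int t' = int t + c * int k" for t t'
      by (auto simp: aligned_def)
    then have "acorr (connect v (map A [0..<k])) (connect w (map A [0..<k])) (K * int N)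
        = E * (\<Sum>t<R * k. \<Sum>t'<R' * k. v ! t * cnj (w ! t') * (if int t' = int t + c * int k then 1 else 0))"
      unfolding expand sum_distrib_left by (intro sum.cong refl) simp
    also have "\<dots> = E * acorr v w (c * int k)"
      by (simp add: acorr_double_sum v_len w_len)
    finally show ?thesis
      using k l c by (simp add: vw_orth)
  next
    case False
    then have "\<not> aligned t t'" "K \<noteq> 0" for t t'
      by (auto simp: aligned_def)
    then show ?thesis
      by (simp add: expand)
  qed
qed

lemma connect_cross_groups:
  fixes A B :: "nat \<Rightarrow> complex list"
  assumes k: "k > 0" "k' > 0"
    and A_len: "\<And>j. j < k \<Longrightarrow> length (A j) = l * N"
    and B_len: "\<And>j. j < k' \<Longrightarrow> length (B j) = l' * N"
    and AB_orth: "\<And>j j' K. j < k \<Longrightarrow> j' < k' \<Longrightarrow> acorr (A j) (B j') (K * int N) = 0"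
    and v_len: "length v = R * k" and w_len: "length w = R' * k'"
  shows "acorr (connect v (map A [0..<k])) (connect w (map B [0..<k'])) (K * int N) = 0"
proof -
  have block: "acorr (A (t mod k)) (B (t' mod k')) (K * int N + int t * int (l * N) - int t' * int (l' * N)) = 0"
    for t t'
  proof -
    have "K * int N + int t * int (l * N) - int t' * int (l' * N) = (K + int t * int l - int t' * int l') * int N"
      by (simp add: algebra_simps)
    then show ?thesis
      using AB_orth[of "t mod k" "t' mod k'"] k by simp
  qed
  show ?thesis
    by (subst acorr_connect[where L = "l * N" and L' = "l' * N"])
       (use k v_len w_len A_len B_len block in simp_all)
qed

lemma grouped_co_sf_orth:
  assumes co: "co_sf M N LL a"
    and idx: "bij_betw (\<lambda>(q, j). idx q j) (SIGMA q:Q. {..<k q}) {..<M}"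
    and energy: "\<And>q j. q \<in> Q \<Longrightarrow> j < k q \<Longrightarrow> energy (a (idx q j)) = energy (a (idx q 0))"
    and qj: "q \<in> Q" "j < k q" and qj': "q' \<in> Q" "j' < k q'"
  shows "acorr (a (idx q j)) (a (idx q' j')) (K * int N)
           = (if (q, j) = (q', j') \<and> K = 0 then energy (a (idx q 0)) else 0)"
proof -
  have in_range: "idx q j < M" "idx q' j' < M"
    using bij_betw_apply[OF idx] qj qj' by auto
  have "idx q j = idx q' j' \<longleftrightarrow> (q, j) = (q', j')"
    using bij_betw_imp_inj_on[OF idx] qj qj' by (auto simp: inj_on_def)
  then show ?thesis
    using co in_range energy[OF qj] unfolding co_sf_def by auto
qed

lemma co_sf_of_reindexed:
  assumes e: "bij_betw e {..<M} S"
    and dvd: "\<And>p. p \<in> S \<Longrightarrow> N dvd length (s p)"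
    and orth: "\<And>p p' K. p \<in> S \<Longrightarrow> p' \<in> S \<Longrightarrow>
                 acorr (s p) (s p') (K * int N) = (if p = p' \<and> K = 0 then energy (s p) else 0)"
  shows "co_sf M N ((\<lambda>p. length (s p)) ` S) (\<lambda>i. s (e i))"
proof -
  have "e i \<in> S" if "i < M" for i
    using bij_betw_apply[OF e] that by simp
  moreover have "e i = e i' \<longleftrightarrow> i = i'" if "i < M" "i' < M" for i i'
    using bij_betw_imp_inj_on[OF e] that by (auto simp: inj_on_eq_iff)
  moreover have "(\<lambda>p. length (s p)) ` S = {length (s (e i)) | i. i < M}"
    using bij_betw_imp_surj_on[OF e] by auto
  ultimately show ?thesis
    using dvd orth unfolding co_sf_def by auto
qed

definition connected_family ::
    "('q \<Rightarrow> nat \<Rightarrow> complex list) \<Rightarrow> ('q \<Rightarrow> nat \<Rightarrow> complex list) \<Rightarrow> ('q \<Rightarrow> nat) \<Rightarrow> 'q \<times> nat \<Rightarrow> complex list"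
  where "connected_family v A k = (\<lambda>(q, m). connect (v q m) (map (A q) [0..<k q]))"

locale grouped_connection =
  fixes Q :: "'q set" and k l :: "'q \<Rightarrow> nat" and N :: nat
    and A :: "'q \<Rightarrow> nat \<Rightarrow> complex list" and E :: "'q \<Rightarrow> complex"
    and v :: "'q \<Rightarrow> nat \<Rightarrow> complex list" and r :: "'q \<Rightarrow> nat \<Rightarrow> nat" and LLv :: "'q \<Rightarrow> nat set"
  assumes k_pos: "\<And>q. q \<in> Q \<Longrightarrow> k q > 0" and l_pos: "\<And>q. q \<in> Q \<Longrightarrow> l q > 0"
    and A_len: "\<And>q j. q \<in> Q \<Longrightarrow> j < k q \<Longrightarrow> length (A q j) = l q * N"
    and A_orth: "\<And>q q' j j' K. q \<in> Q \<Longrightarrow> q' \<in> Q \<Longrightarrow> j < k q \<Longrightarrow> j' < k q' \<Longrightarrow>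
        acorr (A q j) (A q' j') (K * int N) = (if (q, j) = (q', j') \<and> K = 0 then E q else 0)"
    and v_cosf: "\<And>q. q \<in> Q \<Longrightarrow> co_sf (k q) (k q) (LLv q) (v q)"
    and v_len: "\<And>q m. q \<in> Q \<Longrightarrow> m < k q \<Longrightarrow> length (v q m) = r q m * k q"
begin

lemma length_connected_family:
  "p \<in> (SIGMA q:Q. {..<k q}) \<Longrightarrow> length (connected_family v A k p) = (case p of (q, m) \<Rightarrow> r q m * k q * l q * N)"
  using length_connect k_pos v_len A_len by (auto simp: connected_family_def)

lemma connected_family_orth:
  assumes "p \<in> (SIGMA q:Q. {..<k q})" "p' \<in> (SIGMA q:Q. {..<k q})"
  shows "acorr (connected_family v A k p) (connected_family v A k p') (K * int N)
           = (if p = p' \<and> K = 0 then energy (connected_family v A k p) else 0)"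
proof -
  obtain q m q' m' where p: "p = (q, m)" "q \<in> Q" "m < k q" and p': "p' = (q', m')" "q' \<in> Q" "m' < k q'"
    using assms by auto
  show ?thesis
  proof (cases "q = q'")
    case True
    have same: "acorr (connect (v q m) (map (A q) [0..<k q])) (connect (v q m'') (map (A q) [0..<k q])) (K' * int N)
        = E q * (if m = m'' \<and> K' = 0 then energy (v q m) else 0)" if "m'' < k q" for m'' K'
      by (rule connect_same_group[where l = "l q" and R = "r q m" and R' = "r q m''"])
         (use p that k_pos l_pos A_len A_orth v_len v_cosf in \<open>auto simp: co_sf_def\<close>)
    have "energy (connect (v q m) (map (A q) [0..<k q])) = E q * energy (v q m)"
      using same[OF p(3), of 0] by (simp add: energy_def)
    then show ?thesis
      using same[of m' K] True p p' by (auto simp: connected_family_def)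
  next
    case False
    then show ?thesis
      using p p' by (auto intro!: connect_cross_groups simp: connected_family_def k_pos A_len A_orth v_len)
  qed
qed

end

theorem theorem3:
  fixes N :: nat
    and a :: "nat \<Rightarrow> complex list"
    and LL :: "nat set"
    and Q :: "'q set"
    and k :: "'q \<Rightarrow> nat"
    and idx :: "'q \<Rightarrow> nat \<Rightarrow> nat"
    and l :: "'q \<Rightarrow> nat"
    and v :: "'q \<Rightarrow> nat \<Rightarrow> complex list"
    and LLq :: "'q \<Rightarrow> nat set"
    and r :: "'q \<Rightarrow> nat \<Rightarrow> nat"
    and e :: "nat \<Rightarrow> 'q \<times> nat"
  assumes N_pos: "N \<ge> 1"
    and A_cosf: "co_sf N N LL a"
    and partition: "bij_betw (\<lambda>(q, j). idx q j) (SIGMA q:Q. {..<k q}) {..<N}"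
    and k_pos: "\<And>q. q \<in> Q \<Longrightarrow> k q > 0"
    and l_pos: "\<And>q. q \<in> Q \<Longrightarrow> l q > 0"
    and common_len: "\<And>q j. q \<in> Q \<Longrightarrow> j < k q \<Longrightarrow> length (a (idx q j)) = l q * N"
    and common_energy: "\<And>q j. q \<in> Q \<Longrightarrow> j < k q \<Longrightarrow> energy (a (idx q j)) = energy (a (idx q 0))"
    and V_cosf: "\<And>q. q \<in> Q \<Longrightarrow> co_sf (k q) (k q) (LLq q) (v q)"
    and r_pos: "\<And>q m. q \<in> Q \<Longrightarrow> m < k q \<Longrightarrow> r q m > 0"
    and v_len: "\<And>q m. q \<in> Q \<Longrightarrow> m < k q \<Longrightarrow> length (v q m) = r q m * k q"
    and e_bij: "bij_betw e {..<N} (SIGMA q:Q. {..<k q})"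
  shows "co_sf N N {r q m * k q * l q * N | q m. q \<in> Q \<and> m < k q}
           (\<lambda>i. case e i of (q, m) \<Rightarrow> connect (v q m) (map (\<lambda>j. a (idx q j)) [0..<k q]))"
proof -
  let ?A = "\<lambda>q j. a (idx q j)" and ?S = "SIGMA q:Q. {..<k q}"
  interpret grouped_connection Q k l N ?A "\<lambda>q. energy (a (idx q 0))" v r LLq
    using grouped_co_sf_orth[OF A_cosf partition common_energy]
    by unfold_locales (use k_pos l_pos common_len V_cosf v_len in auto)
  have "co_sf N N ((\<lambda>p. length (connected_family v ?A k p)) ` ?S) (\<lambda>i. connected_family v ?A k (e i))"
    by (rule co_sf_of_reindexed[OF e_bij]) (use length_connected_family connected_family_orth in auto)
  moreover have "(\<lambda>p. length (connected_family v ?A k p)) ` ?S = {r q m * k q * l q * N | q m. q \<in> Q \<and> m < k q}"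
    using length_connected_family by (auto simp: image_iff)
  ultimately show ?thesis
    by (simp add: connected_family_def)
qed

end
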